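(* Let $k\ge 2$, $N\ge 2$. Then $$\det(\lambda I-\widetilde H)=\frac{1}{k!}\sum_{j=0}^{k-1}|s(k,k-j)|\prod_{\substack{i=0\\ i\ne j}}^{k-1}\bigl(\lambda-N^{k-i}\bigr),$$ equivalently $$\frac{\det(\lambda I-\widetilde H)}{\det(\lambda I-H)}=\sum_{j=0}^{k-1}\frac{|s(k,k-j)|/k!}{\lambda-N^{k-j}}.$$
   Context: $H[c,c'] = \#\{(d_1,\ldots,d_k)\in\{0,\ldots,N-1\}^k : \lfloor (d_1+\cdots+d_k+c)/N\rfloor = c'\}$ for $c,c'\in\{0,\ldots,k-1\}$ (count matrix of the carry chain of $k$-summand base-$N$ addition); $\widetilde H$ is its leading $(k-1)\times(k-1)$ principal submatrix (indices $0,\ldots,k-2$). $|s(k,m)|$ is the unsigned Stirling number of the first kind, the coefficient of $x^m$ in $x(x+1)\cdots(x+k-1)$. *)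

theory Defs
  imports "Jordan_Normal_Form.Char_Poly" "HOL-Combinatorics.Stirling"
begin

(* H[c,c'] = #{(d_1..d_k) in {0..N-1}^k : floor((d_1+...+d_k+c)/N) = c'}.
   Tuples are functions on {..<k} (PiE); for naturals floor(x/N) = x div N. *)
definition carry_count :: "nat \<Rightarrow> nat \<Rightarrow> nat \<Rightarrow> nat \<Rightarrow> nat" where
  "carry_count k N c c' =
     card {d \<in> {..<k} \<rightarrow>\<^sub>E {..<N}. (sum d {..<k} + c) div N = c'}"

definition carry_mat :: "nat \<Rightarrow> nat \<Rightarrow> real mat" where
  "carry_mat k N = mat k k (\<lambda>(c, c'). real (carry_count k N c c'))"

definition carry_mat_trunc :: "nat \<Rightarrow> nat \<Rightarrow> real mat" where
  "carry_mat_trunc k N = mat (k - 1) (k - 1) (\<lambda>(c, c'). real (carry_count k N c c'))"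

end

theory Submission
  imports Defs
begin

(* Carry matrices are multiplicative, H_N * H_M = H_(N*M): adding base-N*M digits amounts to
   adding the low base-N digits first and then the high base-M digits together with that carry.
   Hence the corner entry of H^e is H_(N^e)[k-1,k-1] = binom(N^e+k-1, k)
   = sum_j |s(k,k-j)|/k! * (N^(k-j))^e, a combination of k distinct exponentials with nonzero
   weights. Cayley-Hamilton applied to this entry shows that det(x I - H) vanishes at every
   N^(k-j), so det(x I - H) = prod_j (x - N^(k-j)). The corner entry of adj(x I - H) is
   det(x I - H~); its coefficients are determined by the powers of H and det(x I - H), which
   yields the partial fraction expansion sum_j |s(k,k-j)|/k! * det(x I - H)/(x - N^(k-j)). *)

section \<open>Polynomials vanishing on prescribed nodes\<close>

lemma coeff_eq_sum_coeff_linear_mult: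
  fixes R :: "'a::comm_ring_1 poly"
  assumes "degree R < M"
  shows "coeff R m = (\<Sum>t\<in>{Suc m..M}. coeff ([:-c, 1:] * R) t * c ^ (t - Suc m))"
proof (induction "M - m" arbitrary: m)
  case 0
  then show ?case
    using assms by (simp add: coeff_eq_0)
next
  case (Suc d)
  then have IH: "coeff R (Suc m) = (\<Sum>t\<in>{Suc (Suc m)..M}. coeff ([:-c, 1:] * R) t * c ^ (t - Suc (Suc m)))"
    by simp
  let ?f = "coeff ([:-c, 1:] * R)"
  have "{Suc m..M} = insert (Suc m) {Suc (Suc m)..M}"
    using Suc.hyps(2) by auto
  then have "(\<Sum>t\<in>{Suc m..M}. ?f t * c ^ (t - Suc m)) =
      ?f (Suc m) + (\<Sum>t\<in>{Suc (Suc m)..M}. ?f t * c ^ (t - Suc m))"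
    by simp
  also have "(\<Sum>t\<in>{Suc (Suc m)..M}. ?f t * c ^ (t - Suc m)) = c * coeff R (Suc m)"
    unfolding IH sum_distrib_left
  proof (intro sum.cong refl)
    fix t assume "t \<in> {Suc (Suc m)..M}"
    then have "t - Suc m = Suc (t - Suc (Suc m))"
      by auto
    then show "?f t * c ^ (t - Suc m) = c * (?f t * c ^ (t - Suc (Suc m)))"
      by (simp only: power_Suc ac_simps)
  qed
  also have "?f (Suc m) = coeff R m - c * coeff R (Suc m)"
    by simp
  finally show ?case
    by simp
qed

lemma root_of_vanishing_moments:
  fixes w \<mu> Q :: "nat \<Rightarrow> 'a::field"
  assumes moments: "\<And>s. (\<Sum>j<n. w j * \<mu> j ^ s * Q j) = 0"
    and inj: "inj_on \<mu> {..<n}" and j: "j < n" and "w j \<noteq> 0"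
  shows "Q j = 0"
proof -
  \<comment> \<open>pairing the moments with the Lagrange polynomial for the node \<open>\<mu> j\<close> isolates the \<open>j\<close>-th term\<close>
  define r where "r = (\<Prod>l\<in>{..<n} - {j}. [:- \<mu> l, 1:])"
  have poly_r: "poly r x = (\<Prod>l\<in>{..<n} - {j}. x - \<mu> l)" for x
    unfolding r_def poly_prod by simp
  have "w j * poly r (\<mu> j) * Q j = (\<Sum>l<n. w l * poly r (\<mu> l) * Q l)"
    using j by (subst sum.mono_neutral_right[of "{..<n}" "{j}"]) (auto simp: poly_r)
  also have "\<dots> = (\<Sum>s\<le>degree r. coeff r s * (\<Sum>l<n. w l * \<mu> l ^ s * Q l))"
    by (simp add: poly_altdef sum_distrib_left sum_distrib_right sum.swap[of _ "{..<n}"] algebra_simps)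
  also have "\<dots> = 0"
    using moments by simp
  finally have "w j * poly r (\<mu> j) * Q j = 0" .
  moreover have "poly r (\<mu> j) \<noteq> 0"
    using inj j unfolding poly_r by (auto dest: inj_onD)
  ultimately show ?thesis
    using assms(4) by simp
qed

lemma poly_eq_prod_linear_if_roots:
  fixes q :: "'a::idom poly"
  assumes "degree q = n" and "coeff q n = 1"
    and "\<And>j. j < n \<Longrightarrow> poly q (\<mu> j) = 0" and "inj_on \<mu> {..<n}"
  shows "q = (\<Prod>j<n. [:- \<mu> j, 1:])"
proof (rule poly_eqI_degree_lead_coeff[where n = n and A = "\<mu> ` {..<n}"])
  have "degree (\<Prod>j<n. [:- \<mu> j, 1:]) = n"
    by (subst degree_prod_sum_eq) auto
  moreover have "lead_coeff (\<Prod>j<n. [:- \<mu> j, 1:]) = 1"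
    by (simp add: lead_coeff_prod)
  ultimately show "coeff q n = coeff (\<Prod>j<n. [:- \<mu> j, 1:]) n" "degree (\<Prod>j<n. [:- \<mu> j, 1:]) \<le> n"
    using assms(2) by simp_all
  show "n \<le> card (\<mu> ` {..<n})" "degree q \<le> n"
    using assms(1,4) by (simp_all add: card_image)
  show "poly q z = poly (\<Prod>j<n. [:- \<mu> j, 1:]) z" if "z \<in> \<mu> ` {..<n}" for z
    using that assms(3) by (auto simp: poly_prod)
qed

section \<open>The adjugate of the characteristic matrix\<close>

lemma index_char_poly_matrix:
  assumes "A \<in> carrier_mat n n" and "i < n" and "j < n"
  shows "char_poly_matrix A $$ (i, j) = (if i = j then [:0, 1:] else 0) - [:A $$ (i, j):]"
  using assms unfolding char_poly_matrix_def by auto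

lemma mat_delete_char_poly_matrix:
  assumes "A \<in> carrier_mat n n"
  shows "mat_delete (char_poly_matrix A) i i = char_poly_matrix (mat_delete A i i)"
  using assms by (intro eq_matI) (auto simp: mat_delete_def char_poly_matrix_def)

lemma adj_char_poly_matrix_diag:
  assumes "A \<in> carrier_mat n n" and "i < n"
  shows "adj_mat (char_poly_matrix A) $$ (i, i) = char_poly (mat_delete A i i)"
proof -
  have "(-1) ^ (i + i) = (1 :: 'a poly)"
    by (simp flip: mult_2)
  then show ?thesis
    using assms carrier_matD[OF char_poly_matrix_closed[OF assms(1)]]
    by (simp add: adj_mat_def cofactor_def char_poly_def mat_delete_char_poly_matrix)
qed

lemma index_pow_mat_Suc:
  assumes "A \<in> carrier_mat n n" and "i < n" and "j < n"
  shows "(A ^\<^sub>m Suc e) $$ (i, j) = (\<Sum>l<n. (A ^\<^sub>m e) $$ (i, l) * A $$ (l, j))"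
  using assms by (simp add: scalar_prod_def lessThan_atLeast0)

lemma degree_adj_char_poly_matrix:
  assumes A: "A \<in> carrier_mat n n" and "i < n" and "j < n"
  shows "degree (adj_mat (char_poly_matrix A) $$ (i, j)) < n"
proof -
  let ?D = "mat_delete (char_poly_matrix A) j i"
  have D: "?D \<in> carrier_mat (n - 1) (n - 1)"
    using A by (intro mat_delete_carrier) simp
  have "degree (?D $$ (a, b)) \<le> 1" if "a < n - 1" "b < n - 1" for a b
    using A that by (auto simp: mat_delete_def char_poly_matrix_def degree_add_le)
  then have "degree (det ?D) \<le> 1 * (n - 1)"
    using D by (rule degree_det_le)
  moreover have "degree ((-1) ^ (j + i) * det ?D) \<le> degree (det ?D)"
    by (cases "even (j + i)") simp_all
  ultimately show ?thesis
    using assms carrier_matD[OF char_poly_matrix_closed[OF A]]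
    by (simp add: adj_mat_def cofactor_def)
qed

lemma adj_char_poly_matrix_recurrence:
  assumes A: "A \<in> carrier_mat n n" and i: "i < n" and j: "j < n"
  defines "C \<equiv> adj_mat (char_poly_matrix A)"
  shows "pCons 0 (C $$ (i, j)) - (\<Sum>l<n. Polynomial.smult (A $$ (l, j)) (C $$ (i, l))) =
    (if i = j then char_poly A else 0)"
proof -
  have P: "char_poly_matrix A \<in> carrier_mat n n"
    using A by simp
  have C: "C \<in> carrier_mat n n"
    unfolding C_def by (rule adj_mat(1)[OF P])
  have "(if i = j then char_poly A else 0) = (C * char_poly_matrix A) $$ (i, j)"
    using adj_mat(3)[OF P] i j unfolding C_def char_poly_def by simp
  also have "\<dots> = (\<Sum>l<n. C $$ (i, l) * char_poly_matrix A $$ (l, j))"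
    using P C i j by (simp add: scalar_prod_def lessThan_atLeast0)
  also have "\<dots> = (\<Sum>l<n. (if l = j then pCons 0 (C $$ (i, l)) else 0) - Polynomial.smult (A $$ (l, j)) (C $$ (i, l)))"
    using A j by (intro sum.cong refl) (auto simp: index_char_poly_matrix right_diff_distrib)
  also have "\<dots> = pCons 0 (C $$ (i, j)) - (\<Sum>l<n. Polynomial.smult (A $$ (l, j)) (C $$ (i, l)))"
    using j by (simp add: sum_subtractf)
  finally show ?thesis ..
qed

lemma sum_pow_mat_recurrence:
  fixes q :: "nat \<Rightarrow> 'a::comm_ring_1"
  assumes A: "A \<in> carrier_mat n n" and i: "i < n" and j: "j < n" and m: "m < n"
  shows "(if i = j then q (Suc m) else 0) +
      (\<Sum>l<n. A $$ (l, j) * (\<Sum>t\<in>{Suc (Suc m)..n}. q t * (A ^\<^sub>m (t - Suc (Suc m))) $$ (i, l))) =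
    (\<Sum>t\<in>{Suc m..n}. q t * (A ^\<^sub>m (t - Suc m)) $$ (i, j))"
proof -
  have "(\<Sum>l<n. A $$ (l, j) * (\<Sum>t\<in>{Suc (Suc m)..n}. q t * (A ^\<^sub>m (t - Suc (Suc m))) $$ (i, l))) =
      (\<Sum>t\<in>{Suc (Suc m)..n}. q t * (\<Sum>l<n. (A ^\<^sub>m (t - Suc (Suc m))) $$ (i, l) * A $$ (l, j)))"
    by (simp add: sum_distrib_left sum_distrib_right sum.swap[of _ "{..<n}"] algebra_simps)
  also have "\<dots> = (\<Sum>t\<in>{Suc (Suc m)..n}. q t * (A ^\<^sub>m (t - Suc m)) $$ (i, j))"
  proof (intro sum.cong refl)
    fix t assume "t \<in> {Suc (Suc m)..n}"
    then have "t - Suc m = Suc (t - Suc (Suc m))"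
      by auto
    then show "q t * (\<Sum>l<n. (A ^\<^sub>m (t - Suc (Suc m))) $$ (i, l) * A $$ (l, j)) =
        q t * (A ^\<^sub>m (t - Suc m)) $$ (i, j)"
      using index_pow_mat_Suc[OF A i j] by simp
  qed
  moreover have "{Suc m..n} = insert (Suc m) {Suc (Suc m)..n}"
    using m by auto
  ultimately show ?thesis
    using i j carrier_matD[OF A] by simp
qed

lemma coeff_adj_char_poly_matrix:
  assumes A: "A \<in> carrier_mat n n" and i: "i < n" and j: "j < n"
  shows "coeff (adj_mat (char_poly_matrix A) $$ (i, j)) m =
    (\<Sum>t\<in>{Suc m..n}. coeff (char_poly A) t * (A ^\<^sub>m (t - Suc m)) $$ (i, j))"
proof -
  let ?c = "\<lambda>m j. coeff (adj_mat (char_poly_matrix A) $$ (i, j)) m"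
  let ?q = "coeff (char_poly A)"
  have recurrence: "?c m j = (if i = j then ?q (Suc m) else 0) + (\<Sum>l<n. A $$ (l, j) * ?c (Suc m) l)"
    if "j < n" for m j
    using arg_cong[OF adj_char_poly_matrix_recurrence[OF A i that], of "\<lambda>p. coeff p (Suc m)"]
    by (simp add: coeff_sum algebra_simps)
  \<comment> \<open>downward induction on \<open>m\<close>, starting above the degree bound where both sides vanish\<close>
  have "\<forall>j<n. ?c m j = (\<Sum>t\<in>{Suc m..n}. ?q t * (A ^\<^sub>m (t - Suc m)) $$ (i, j))"
  proof (induction "n - m" arbitrary: m)
    case 0
    then have "n \<le> m"
      by simp
    moreover have "degree (adj_mat (char_poly_matrix A) $$ (i, j)) < m" if "j < n" for j
      using degree_adj_char_poly_matrix[OF A i that] \<open>n \<le> m\<close> by simp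
    ultimately show ?case
      by (simp add: coeff_eq_0)
  next
    case (Suc d)
    show ?case
    proof (intro allI impI)
      fix j assume j: "j < n"
      have "?c m j = (if i = j then ?q (Suc m) else 0) + (\<Sum>l<n. A $$ (l, j) *
          (\<Sum>t\<in>{Suc (Suc m)..n}. ?q t * (A ^\<^sub>m (t - Suc (Suc m))) $$ (i, l)))"
        using recurrence[OF j] Suc.hyps by simp
      also have "\<dots> = (\<Sum>t\<in>{Suc m..n}. ?q t * (A ^\<^sub>m (t - Suc m)) $$ (i, j))"
        using Suc.hyps(2) by (intro sum_pow_mat_recurrence[OF A i j]) simp
      finally show "?c m j = (\<Sum>t\<in>{Suc m..n}. ?q t * (A ^\<^sub>m (t - Suc m)) $$ (i, j))" .
    qed
  qed
  then show ?thesis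
    using j by simp
qed

lemma char_poly_annihilates_pow_mat:
  assumes A: "A \<in> carrier_mat n n" and i: "i < n" and j: "j < n"
  shows "(\<Sum>t\<le>n. coeff (char_poly A) t * (A ^\<^sub>m (t + s)) $$ (i, j)) = 0"
  using j
proof (induction s arbitrary: j)
  case 0
  let ?q = "coeff (char_poly A)"
  have "- (\<Sum>l<n. A $$ (l, j) * coeff (adj_mat (char_poly_matrix A) $$ (i, l)) 0) =
      (if i = j then ?q 0 else 0)"
    using arg_cong[OF adj_char_poly_matrix_recurrence[OF A i 0], of "\<lambda>p. coeff p 0"]
    by (simp add: coeff_sum)
  also have "(\<Sum>l<n. A $$ (l, j) * coeff (adj_mat (char_poly_matrix A) $$ (i, l)) 0) =
      (\<Sum>t\<in>{Suc 0..n}. ?q t * (\<Sum>l<n. (A ^\<^sub>m (t - Suc 0)) $$ (i, l) * A $$ (l, j)))"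
    by (simp add: coeff_adj_char_poly_matrix[OF A i] sum_distrib_left sum_distrib_right
        sum.swap[of _ "{..<n}"] algebra_simps)
  also have "\<dots> = (\<Sum>t\<in>{Suc 0..n}. ?q t * (A ^\<^sub>m t) $$ (i, j))"
  proof (intro sum.cong refl)
    fix t assume "t \<in> {Suc 0..n}"
    then have "t = Suc (t - Suc 0)"
      by auto
    then show "?q t * (\<Sum>l<n. (A ^\<^sub>m (t - Suc 0)) $$ (i, l) * A $$ (l, j)) = ?q t * (A ^\<^sub>m t) $$ (i, j)"
      using index_pow_mat_Suc[OF A i 0, of "t - Suc 0"] by simp
  qed
  finally have "?q 0 * (A ^\<^sub>m 0) $$ (i, j) + (\<Sum>t\<in>{Suc 0..n}. ?q t * (A ^\<^sub>m t) $$ (i, j)) = 0"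
    using i 0 carrier_matD[OF A] by (auto simp: minus_equation_iff add_eq_0_iff)
  moreover have "{..n} = insert 0 {Suc 0..n}"
    by auto
  ultimately show ?case
    by simp
next
  case (Suc s)
  have "(\<Sum>t\<le>n. coeff (char_poly A) t * (A ^\<^sub>m (t + Suc s)) $$ (i, j)) =
      (\<Sum>l<n. (\<Sum>t\<le>n. coeff (char_poly A) t * (A ^\<^sub>m (t + s)) $$ (i, l)) * A $$ (l, j))"
    using index_pow_mat_Suc[OF A i Suc.prems]
    by (simp add: sum_distrib_left sum_distrib_right sum.swap[of _ "{..<n}"] algebra_simps)
  also have "\<dots> = 0"
    using Suc.IH by simp
  finally show ?case .
qed

lemma char_poly_eq_prod_if_diagonal_moments:
  fixes A :: "'a::field mat"
  assumes A: "A \<in> carrier_mat n n" and i: "i < n"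
    and moments: "\<And>e. (A ^\<^sub>m e) $$ (i, i) = (\<Sum>j<n. w j * \<mu> j ^ e)"
    and inj: "inj_on \<mu> {..<n}" and w: "\<And>j. j < n \<Longrightarrow> w j \<noteq> 0"
  shows "char_poly A = (\<Prod>j<n. [:- \<mu> j, 1:])"
proof -
  let ?q = "char_poly A"
  have deg: "degree ?q = n" and monic: "coeff ?q n = 1"
    using degree_monic_char_poly[OF A] by auto
  have vanishing: "(\<Sum>l<n. w l * \<mu> l ^ s * poly ?q (\<mu> l)) = 0" for s
  proof -
    have "0 = (\<Sum>t\<le>n. coeff ?q t * (A ^\<^sub>m (t + s)) $$ (i, i))"
      using char_poly_annihilates_pow_mat[OF A i i] by simp
    also have "\<dots> = (\<Sum>l<n. w l * \<mu> l ^ s * (\<Sum>t\<le>n. coeff ?q t * \<mu> l ^ t))"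
      by (simp add: moments sum_distrib_left sum_distrib_right sum.swap[of _ "{..<n}"] power_add algebra_simps)
    also have "\<dots> = (\<Sum>l<n. w l * \<mu> l ^ s * poly ?q (\<mu> l))"
      by (simp add: poly_altdef deg)
    finally show ?thesis ..
  qed
  have roots: "poly ?q (\<mu> j) = 0" if "j < n" for j
    using root_of_vanishing_moments[OF vanishing inj that w[OF that]] .
  show ?thesis
    using deg monic roots inj by (rule poly_eq_prod_linear_if_roots)
qed

lemma adj_char_poly_matrix_diag_if_moments:
  fixes A :: "'a::field mat"
  assumes A: "A \<in> carrier_mat n n" and i: "i < n"
    and moments: "\<And>e. (A ^\<^sub>m e) $$ (i, i) = (\<Sum>j<n. w j * \<mu> j ^ e)"
    and char_poly: "char_poly A = (\<Prod>j<n. [:- \<mu> j, 1:])"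
  shows "adj_mat (char_poly_matrix A) $$ (i, i) =
    (\<Sum>j<n. Polynomial.smult (w j) (\<Prod>l\<in>{..<n} - {j}. [:- \<mu> l, 1:]))"
proof (rule poly_eqI)
  fix m
  let ?q = "char_poly A"
  let ?R = "\<lambda>j. \<Prod>l\<in>{..<n} - {j}. [:- \<mu> l, 1:]"
  have quotient: "(\<Sum>t\<in>{Suc m..n}. coeff ?q t * \<mu> j ^ (t - Suc m)) = coeff (?R j) m" if "j < n" for j
  proof -
    have "?q = [:- \<mu> j, 1:] * ?R j"
      unfolding char_poly using that by (subst prod.remove[of _ j]) auto
    moreover have "degree (?R j) < n"
    proof -
      have "degree (?R j) \<le> (\<Sum>l\<in>{..<n} - {j}. degree [:- \<mu> l, 1:])"
        using degree_prod_sum_le[of "{..<n} - {j}" "\<lambda>l. [:- \<mu> l, 1:]"] by (simp add: o_def)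
      also have "\<dots> < n"
        using that by simp
      finally show ?thesis .
    qed
    ultimately show ?thesis
      using coeff_eq_sum_coeff_linear_mult[of "?R j" n m "\<mu> j"] by (simp only:)
  qed
  have "coeff (adj_mat (char_poly_matrix A) $$ (i, i)) m =
      (\<Sum>t\<in>{Suc m..n}. coeff ?q t * (\<Sum>j<n. w j * \<mu> j ^ (t - Suc m)))"
    by (simp add: coeff_adj_char_poly_matrix[OF A i i] moments)
  also have "\<dots> = (\<Sum>j<n. w j * (\<Sum>t\<in>{Suc m..n}. coeff ?q t * \<mu> j ^ (t - Suc m)))"
    by (simp add: sum_distrib_left sum_distrib_right sum.swap[of _ "{..<n}"] algebra_simps)
  also have "\<dots> = coeff (\<Sum>j<n. Polynomial.smult (w j) (?R j)) m"
    by (simp add: quotient coeff_sum)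
  finally show "coeff (adj_mat (char_poly_matrix A) $$ (i, i)) m = coeff (\<Sum>j<n. Polynomial.smult (w j) (?R j)) m" .
qed

section \<open>Carry matrices\<close>

lemma carry_count_eq_sum:
  "carry_count k N c c' =
    (\<Sum>d\<in>{..<k} \<rightarrow>\<^sub>E {..<N}. if (sum d {..<k} + c) div N = c' then 1 else 0)"
  unfolding carry_count_def by (simp add: sum.If_cases finite_PiE Int_def)

lemma carry_count_base_1: "carry_count k 1 c c' = (if c = c' then 1 else 0)"
proof -
  have "{..<k} \<rightarrow>\<^sub>E {..<1} = {\<lambda>i\<in>{..<k}. 0 :: nat}"
    by (auto simp: PiE_def extensional_def fun_eq_iff)
  moreover have "{d \<in> {\<lambda>i\<in>{..<k}. 0}. (sum d {..<k} + c) div 1 = c'} =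
      (if c = c' then {\<lambda>i\<in>{..<k}. 0} else {})"
    by auto
  ultimately show ?thesis
    unfolding carry_count_def by simp
qed

lemma sum_PiE_lessThan_bound:
  fixes d :: "nat \<Rightarrow> nat"
  assumes "d \<in> {..<k} \<rightarrow>\<^sub>E {..<N}"
  shows "sum d {..<k} + k \<le> k * N"
proof -
  have "sum d {..<k} + k = (\<Sum>i<k. d i + 1)"
    by (induct k) auto
  also have "\<dots> \<le> (\<Sum>i<k. N)"
    using assms by (intro sum_mono) (auto simp: PiE_def Pi_def)
  finally show ?thesis by simp
qed

lemma carry_lt:
  fixes d :: "nat \<Rightarrow> nat"
  assumes "d \<in> {..<k} \<rightarrow>\<^sub>E {..<N}" and "c < k"
  shows "(sum d {..<k} + c) div N < k"
proof -
  have "sum d {..<k} + c < k * N"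
    using sum_PiE_lessThan_bound[OF assms(1)] assms(2) by linarith
  then show ?thesis by (simp add: less_mult_imp_div_less)
qed

lemma sum_PiE_lessThan_mult:
  fixes f :: "(nat \<Rightarrow> nat) \<Rightarrow> 'b::comm_monoid_add"
  assumes "N > 0"
  shows "(\<Sum>d\<in>{..<k} \<rightarrow>\<^sub>E {..<N * M}. f d) =
    (\<Sum>a\<in>{..<k} \<rightarrow>\<^sub>E {..<N}. \<Sum>b\<in>{..<k} \<rightarrow>\<^sub>E {..<M}. f (\<lambda>i\<in>{..<k}. a i + N * b i))"
proof -
  have digits: "a + N * b < N * M" if "a < N" "b < M" for a b :: nat
  proof -
    have "a + N * b < N * Suc b" using that by simp
    also have "\<dots> \<le> N * M" using that by (intro mult_le_mono2) simp
    finally show ?thesis .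
  qed
  have high_digit: "d div N < M" if "d < N * M" for d :: nat
    using that by (simp add: less_mult_imp_div_less mult.commute)
  have "(\<Sum>(a, b)\<in>({..<k} \<rightarrow>\<^sub>E {..<N}) \<times> ({..<k} \<rightarrow>\<^sub>E {..<M}). f (\<lambda>i\<in>{..<k}. a i + N * b i)) =
      (\<Sum>d\<in>{..<k} \<rightarrow>\<^sub>E {..<N * M}. f d)"
    using assms
    by (intro sum.reindex_bij_witness[where i = "\<lambda>d. (\<lambda>i\<in>{..<k}. d i mod N, \<lambda>i\<in>{..<k}. d i div N)"
          and j = "\<lambda>(a, b). \<lambda>i\<in>{..<k}. a i + N * b i"])
       (auto simp: fun_eq_iff PiE_def extensional_def Pi_def high_digit digits)
  then have "(\<Sum>d\<in>{..<k} \<rightarrow>\<^sub>E {..<N * M}. f d) =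
      (\<Sum>(a, b)\<in>({..<k} \<rightarrow>\<^sub>E {..<N}) \<times> ({..<k} \<rightarrow>\<^sub>E {..<M}). f (\<lambda>i\<in>{..<k}. a i + N * b i))" ..
  also have "\<dots> = (\<Sum>a\<in>{..<k} \<rightarrow>\<^sub>E {..<N}. \<Sum>b\<in>{..<k} \<rightarrow>\<^sub>E {..<M}. f (\<lambda>i\<in>{..<k}. a i + N * b i))"
    by (rule sum.cartesian_product[symmetric])
  finally show ?thesis .
qed

lemma carry_count_mult:
  assumes "N > 0" and "c < k"
  shows "carry_count k (N * M) c c'' = (\<Sum>c'<k. carry_count k N c c' * carry_count k M c' c'')"
proof -
  let ?A = "{..<k} \<rightarrow>\<^sub>E {..<N}" and ?B = "{..<k} \<rightarrow>\<^sub>E {..<M}"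
  let ?carry = "\<lambda>a. (sum a {..<k} + c) div N"
  have "carry_count k (N * M) c c'' = (\<Sum>a\<in>?A. \<Sum>b\<in>?B.
      if (sum (\<lambda>i\<in>{..<k}. a i + N * b i) {..<k} + c) div (N * M) = c'' then 1 else 0)"
    unfolding carry_count_eq_sum using assms(1) by (rule sum_PiE_lessThan_mult)
  also have "\<dots> = (\<Sum>a\<in>?A. \<Sum>b\<in>?B. if (sum b {..<k} + ?carry a) div M = c'' then 1 else 0)"
  proof (intro sum.cong refl)
    fix a b :: "nat \<Rightarrow> nat"
    have "sum (\<lambda>i\<in>{..<k}. a i + N * b i) {..<k} + c = (sum a {..<k} + c) + N * sum b {..<k}"
      by (simp add: sum.distrib sum_distrib_left)
    moreover have "(x + N * y) div (N * M) = (y + x div N) div M" for x y :: nat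
      using assms(1) by (simp add: div_mult2_eq add.commute)
    ultimately show "(if (sum (\<lambda>i\<in>{..<k}. a i + N * b i) {..<k} + c) div (N * M) = c'' then 1 else 0) =
        (if (sum b {..<k} + ?carry a) div M = c'' then 1 else (0::nat))"
      by (simp only:)
  qed
  also have "\<dots> = (\<Sum>a\<in>?A. carry_count k M (?carry a) c'')"
    by (simp add: carry_count_eq_sum)
  also have "\<dots> = (\<Sum>c'<k. \<Sum>a\<in>{a \<in> ?A. ?carry a = c'}. carry_count k M (?carry a) c'')"
    using carry_lt assms(2) by (intro sum.group[symmetric]) (auto simp: finite_PiE)
  also have "\<dots> = (\<Sum>c'<k. \<Sum>a\<in>{a \<in> ?A. ?carry a = c'}. carry_count k M c' c'')"
    by (intro sum.cong refl) auto
  also have "\<dots> = (\<Sum>c'<k. carry_count k N c c' * carry_count k M c' c'')"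
    by (simp add: carry_count_def)
  finally show ?thesis .
qed

lemma carry_mat_carrier: "carry_mat k N \<in> carrier_mat k k"
  unfolding carry_mat_def by simp

lemma carry_mat_index: "i < k \<Longrightarrow> j < k \<Longrightarrow> carry_mat k N $$ (i, j) = real (carry_count k N i j)"
  unfolding carry_mat_def by simp

lemma carry_mat_mult:
  assumes "N > 0"
  shows "carry_mat k N * carry_mat k M = carry_mat k (N * M)"
proof (rule eq_matI)
  fix i j assume "i < dim_row (carry_mat k (N * M))" "j < dim_col (carry_mat k (N * M))"
  then have ij: "i < k" "j < k"
    by (simp_all add: carry_mat_def)
  then show "(carry_mat k N * carry_mat k M) $$ (i, j) = carry_mat k (N * M) $$ (i, j)"
    using carry_count_mult[OF assms ij(1)]
    by (simp add: carry_mat_def scalar_prod_def lessThan_atLeast0 of_nat_sum)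
qed (simp_all add: carry_mat_def)

lemma carry_mat_base_1: "carry_mat k 1 = 1\<^sub>m k"
  using carry_count_base_1[of k] by (intro eq_matI) (simp_all add: carry_mat_def)

lemma carry_mat_pow:
  assumes "N > 0"
  shows "carry_mat k N ^\<^sub>m e = carry_mat k (N ^ e)"
proof (induction e)
  case 0
  have "dim_row (carry_mat k N) = k"
    by (simp add: carry_mat_def)
  then show ?case
    by (simp only: pow_mat.simps power_0 carry_mat_base_1)
next
  case (Suc e)
  then show ?case
    using assms by (simp add: carry_mat_mult mult.commute)
qed

lemma sum_PiE_lessThan_Suc:
  fixes f :: "(nat \<Rightarrow> 'a) \<Rightarrow> 'b::comm_monoid_add"
  assumes "finite B"
  shows "(\<Sum>e\<in>{..<Suc n} \<rightarrow>\<^sub>E B. f e) = (\<Sum>v\<in>B. \<Sum>e\<in>{..<n} \<rightarrow>\<^sub>E B. f (e(n := v)))"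
proof -
  have eq: "{..<Suc n} \<rightarrow>\<^sub>E B = (\<lambda>(v, e). e(n := v)) ` (B \<times> ({..<n} \<rightarrow>\<^sub>E B))"
    using PiE_insert_eq[of n "{..<n}" "\<lambda>_. B"] by (simp add: lessThan_Suc)
  have inj: "inj_on (\<lambda>(v, e). e(n := v)) (B \<times> ({..<n} \<rightarrow>\<^sub>E B))"
    using inj_combinator[of n "{..<n}" "\<lambda>_. B"] by simp
  have "(\<Sum>e\<in>{..<Suc n} \<rightarrow>\<^sub>E B. f e) = (\<Sum>(v, e)\<in>B \<times> ({..<n} \<rightarrow>\<^sub>E B). f (e(n := v)))"
    unfolding eq sum.reindex[OF inj] by (simp add: case_prod_beta comp_def)
  also have "\<dots> = (\<Sum>v\<in>B. \<Sum>e\<in>{..<n} \<rightarrow>\<^sub>E B. f (e(n := v)))"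
    by (rule sum.cartesian_product[symmetric])
  finally show ?thesis .
qed

lemma card_PiE_sum_le:
  assumes "t \<le> L"
  shows "card {e \<in> {..<n} \<rightarrow>\<^sub>E {..<Suc L}. sum e {..<n} \<le> t} = (n + t) choose n"
  using assms
proof (induction n arbitrary: t)
  case 0
  then show ?case by simp
next
  case (Suc n)
  let ?P = "\<lambda>m. {..<m} \<rightarrow>\<^sub>E {..<Suc L}"
  have count_as_sum: "card {e \<in> ?P m. sum e {..<m} \<le> s} =
      (\<Sum>e\<in>?P m. if sum e {..<m} \<le> s then 1 else 0)" for m s :: nat
    by (simp add: sum.inter_filter[symmetric] finite_PiE)
  have last_coordinate: "(\<Sum>e\<in>?P n. if sum e {..<n} + v \<le> t then 1 else 0) =
      (if v \<le> t then (n + (t - v)) choose n else 0)" for v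
  proof (cases "v \<le> t")
    case True
    then have "(\<Sum>e\<in>?P n. if sum e {..<n} + v \<le> t then 1 else 0) =
        (\<Sum>e\<in>?P n. if sum e {..<n} \<le> t - v then 1 else 0)"
      by (simp add: le_diff_conv2)
    also have "\<dots> = (n + (t - v)) choose n"
      using Suc by (simp add: count_as_sum)
    finally show ?thesis using True by simp
  qed simp
  have "card {e \<in> ?P (Suc n). sum e {..<Suc n} \<le> t} =
      (\<Sum>v\<in>{..<Suc L}. \<Sum>e\<in>?P n. if sum (e(n := v)) {..<Suc n} \<le> t then 1 else 0)"
    unfolding count_as_sum by (rule sum_PiE_lessThan_Suc) simp
  also have "\<dots> = (\<Sum>v\<in>{..<Suc L}. \<Sum>e\<in>?P n. if sum e {..<n} + v \<le> t then 1 else 0)"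
  proof (intro sum.cong refl)
    fix v :: nat and e :: "nat \<Rightarrow> nat"
    have "sum (e(n := v)) {..<Suc n} = sum e {..<n} + v"
      by (simp add: lessThan_Suc add.commute)
    then show "(if sum (e(n := v)) {..<Suc n} \<le> t then 1 else 0) =
        (if sum e {..<n} + v \<le> t then 1 else (0::nat))"
      by simp
  qed
  also have "\<dots> = (\<Sum>v<Suc L. if v \<le> t then (n + (t - v)) choose n else 0)"
    by (simp only: last_coordinate)
  also have "\<dots> = (\<Sum>v\<le>t. (n + (t - v)) choose n)"
    using Suc.prems by (intro sum.mono_neutral_cong_right) auto
  also have "\<dots> = (\<Sum>v\<le>t. (n + v) choose n)"
    using sum.atLeastAtMost_rev[of "\<lambda>v. (n + v) choose n" 0 t] by (simp add: atLeast0AtMost)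
  also have "\<dots> = (Suc n + t) choose Suc n"
    by (simp add: choose_rising_sum(1))
  finally show ?case .
qed

lemma card_PiE_sum_complement:
  "card {d \<in> {..<n} \<rightarrow>\<^sub>E {..<Suc L}. n * L \<le> sum d {..<n} + s} =
    card {e \<in> {..<n} \<rightarrow>\<^sub>E {..<Suc L}. sum e {..<n} \<le> s}"
proof -
  let ?P = "{..<n} \<rightarrow>\<^sub>E {..<Suc L}"
  let ?flip = "\<lambda>d. \<lambda>i\<in>{..<n}. L - d i"
  have flip_in: "?flip d \<in> ?P" for d
    by auto
  have flip_flip: "?flip (?flip d) = d" if "d \<in> ?P" for d
    using that by (auto simp: fun_eq_iff PiE_def Pi_def extensional_def)
  have flip_sum: "sum (?flip d) {..<n} + sum d {..<n} = n * L" if "d \<in> ?P" for d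
  proof -
    have "sum (?flip d) {..<n} + sum d {..<n} = (\<Sum>i<n. L - d i + d i)"
      by (simp add: sum.distrib)
    also have "\<dots> = (\<Sum>i<n. L)"
      using that by (intro sum.cong refl) (auto simp: PiE_def Pi_def)
    finally show ?thesis
      by simp
  qed
  show ?thesis
  proof (rule bij_betw_same_card, rule bij_betw_byWitness[where f' = ?flip])
    show "?flip ` {d \<in> ?P. n * L \<le> sum d {..<n} + s} \<subseteq> {e \<in> ?P. sum e {..<n} \<le> s}"
    proof (rule image_subsetI)
      fix d assume "d \<in> {d \<in> ?P. n * L \<le> sum d {..<n} + s}"
      then show "?flip d \<in> {e \<in> ?P. sum e {..<n} \<le> s}"
        using flip_in[of d] flip_sum[of d] by simp
    qed
    show "?flip ` {e \<in> ?P. sum e {..<n} \<le> s} \<subseteq> {d \<in> ?P. n * L \<le> sum d {..<n} + s}"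
    proof (rule image_subsetI)
      fix e assume "e \<in> {e \<in> ?P. sum e {..<n} \<le> s}"
      then show "?flip e \<in> {d \<in> ?P. n * L \<le> sum d {..<n} + s}"
        using flip_in[of e] flip_sum[of e] by simp
    qed
  qed (use flip_flip in blast)+
qed

lemma top_carry_iff:
  fixes d :: "nat \<Rightarrow> nat"
  assumes "d \<in> {..<Suc K} \<rightarrow>\<^sub>E {..<Suc L}"
  shows "(sum d {..<Suc K} + K) div Suc L = K \<longleftrightarrow> K * L \<le> sum d {..<Suc K}"
proof -
  let ?s = "sum d {..<Suc K}"
  have bound: "?s + Suc K \<le> Suc K * Suc L"
    using sum_PiE_lessThan_bound[OF assms] .
  have "(?s + K) div Suc L = K \<longleftrightarrow> K \<le> (?s + K) div Suc L \<and> (?s + K) div Suc L < Suc K"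
    by auto
  also have "\<dots> \<longleftrightarrow> K * Suc L \<le> ?s + K \<and> ?s + K < Suc K * Suc L"
    by (simp only: less_eq_div_iff_mult_less_eq div_less_iff_less_mult zero_less_Suc)
  also have "\<dots> \<longleftrightarrow> K * L \<le> ?s"
    using bound by (simp add: algebra_simps)
  finally show ?thesis .
qed

lemma carry_count_top_diagonal:
  assumes "M > 0" and "k > 0"
  shows "carry_count k M (k - 1) (k - 1) = (M + k - 1) choose k"
proof -
  obtain L where L: "M = Suc L"
    using assms(1) gr0_implies_Suc by blast
  obtain K where K: "k = Suc K"
    using assms(2) gr0_implies_Suc by blast
  let ?P = "{..<k} \<rightarrow>\<^sub>E {..<Suc L}"
  have "carry_count k M (k - 1) (k - 1) = card {d \<in> ?P. k * L \<le> sum d {..<k} + L}"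
    unfolding carry_count_def L K diff_Suc_1 using top_carry_iff
    by (intro arg_cong[where f = card] Collect_cong conj_cong refl) simp
  also have "\<dots> = card {e \<in> ?P. sum e {..<k} \<le> L}"
    by (rule card_PiE_sum_complement)
  also have "\<dots> = (k + L) choose k"
    by (rule card_PiE_sum_le) simp
  moreover have "k + L = M + k - 1"
    using L by simp
  ultimately show ?thesis
    by simp
qed

lemma stirling_pos: "0 < m \<Longrightarrow> m \<le> n \<Longrightarrow> 0 < stirling n m"
proof (induction n arbitrary: m)
  case (Suc n)
  then obtain m' where m: "m = Suc m'"
    using gr0_implies_Suc by blast
  show ?case
  proof (cases "m' = 0")
    case True
    show ?thesis
      unfolding m True stirling_Suc_n_1 by simp
  next
    case False
    then show ?thesis
      using Suc m by simp
  qed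
qed simp

lemma carry_count_top_diagonal_stirling:
  assumes "M > 0" and "k > 0"
  shows "real (carry_count k M (k - 1) (k - 1)) =
    (\<Sum>j<k. real (stirling k (k - j)) / fact k * real M ^ (k - j))"
proof -
  have "real (carry_count k M (k - 1) (k - 1)) = real (M + k - 1) gchoose k"
    using carry_count_top_diagonal[OF assms] by (simp add: binomial_gbinomial)
  also have "\<dots> = pochhammer (real M) k / fact k"
    using assms by (simp add: gbinomial_pochhammer' of_nat_diff)
  also have "pochhammer (real M) k = (\<Sum>i\<le>k. real (stirling k i) * real M ^ i)"
    by (rule stirling_pochhammer[symmetric])
  also have "\<dots> = (\<Sum>j<k. real (stirling k (k - j)) * real M ^ (k - j))"
  proof -
    have "(\<Sum>i\<le>k. real (stirling k i) * real M ^ i) = (\<Sum>i\<in>{0..k}. real (stirling k (k - i)) * real M ^ (k - i))"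
      using sum.atLeastAtMost_rev[of "\<lambda>i. real (stirling k i) * real M ^ i" 0 k] by (simp add: atLeast0AtMost)
    also have "\<dots> = (\<Sum>j<k. real (stirling k (k - j)) * real M ^ (k - j))"
      using assms by (simp add: atLeast0AtMost lessThan_Suc_atMost[symmetric])
    finally show ?thesis .
  qed
  finally show ?thesis
    by (simp add: sum_divide_distrib)
qed

lemma carry_mat_trunc_eq_mat_delete: "carry_mat_trunc k N = mat_delete (carry_mat k N) (k - 1) (k - 1)"
  by (intro eq_matI) (auto simp: carry_mat_trunc_def carry_mat_def mat_delete_def)

lemma carry_mat_pow_top_diagonal:
  assumes "N > 0" and "k > 0"
  shows "(carry_mat k N ^\<^sub>m e) $$ (k - 1, k - 1) =
    (\<Sum>j<k. real (stirling k (k - j)) / fact k * (real N ^ (k - j)) ^ e)"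
proof -
  have "(carry_mat k N ^\<^sub>m e) $$ (k - 1, k - 1) = real (carry_count k (N ^ e) (k - 1) (k - 1))"
    using assms by (simp add: carry_mat_pow carry_mat_index)
  also have "\<dots> = (\<Sum>j<k. real (stirling k (k - j)) / fact k * real (N ^ e) ^ (k - j))"
    using assms by (intro carry_count_top_diagonal_stirling) simp_all
  finally show ?thesis
    by (simp add: power_mult[symmetric] mult.commute)
qed

theorem mainTheorem10:
  fixes k N :: nat
  assumes "k \<ge> 2" and "N \<ge> 2"
  shows "char_poly (carry_mat_trunc k N) =
    Polynomial.smult (1 / fact k)
      (\<Sum>j<k. Polynomial.smult (real (stirling k (k - j)))
          (\<Prod>i\<in>{..<k} - {j}. [: - (real N ^ (k - i)), 1 :]))"
proof -
  have k: "k > 0" and N: "N > 0" and last: "k - 1 < k"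
    using assms by auto
  define \<mu> where "\<mu> j = real N ^ (k - j)" for j
  define w where "w j = real (stirling k (k - j)) / fact k" for j
  have A: "carry_mat k N \<in> carrier_mat k k"
    by (rule carry_mat_carrier)
  have moments: "(carry_mat k N ^\<^sub>m e) $$ (k - 1, k - 1) = (\<Sum>j<k. w j * \<mu> j ^ e)" for e
    unfolding w_def \<mu>_def by (rule carry_mat_pow_top_diagonal[OF N k])
  have "inj_on \<mu> {..<k}"
    using assms by (auto simp: inj_on_def \<mu>_def power_inject_exp)
  moreover have "w j \<noteq> 0" if "j < k" for j
    using stirling_pos[of "k - j" k] that by (simp add: w_def)
  ultimately have char_poly: "char_poly (carry_mat k N) = (\<Prod>j<k. [:- \<mu> j, 1:])"
    by (rule char_poly_eq_prod_if_diagonal_moments[OF A last moments])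
  have "char_poly (carry_mat_trunc k N) = adj_mat (char_poly_matrix (carry_mat k N)) $$ (k - 1, k - 1)"
    unfolding carry_mat_trunc_eq_mat_delete by (rule adj_char_poly_matrix_diag[OF A last, symmetric])
  also have "\<dots> = (\<Sum>j<k. Polynomial.smult (w j) (\<Prod>l\<in>{..<k} - {j}. [:- \<mu> l, 1:]))"
    by (rule adj_char_poly_matrix_diag_if_moments[OF A last moments char_poly])
  also have "\<dots> = Polynomial.smult (1 / fact k)
      (\<Sum>j<k. Polynomial.smult (real (stirling k (k - j)))
          (\<Prod>i\<in>{..<k} - {j}. [: - (real N ^ (k - i)), 1 :]))"
    by (rule poly_eqI) (simp add: w_def \<mu>_def coeff_sum sum_distrib_left)
  finally show ?thesis .
qed

end
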